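(* Let $\mathbf{A}$ be a finite nilpotent algebra with a Mal'cev term, let $0\in A$, and let $\cdot$ and $\backslash$ be the loop multiplication and left division associated with $0$ (see context). Let $f(x_1,\ldots,x_m)\in\operatorname{Pol}_m(\mathbf{A})$, let $a_1,\ldots,a_N$ be an enumeration of the elements of $A$, and let $\bar b\in A^m$. Define $r_0(x_1,\ldots,x_m)=f(0,\ldots,0)$ (a constant), and recursively for $0\le k<m$: $$t_S(\bar x_{\restriction S})=\Big(\prod_{i=0}^{k} r_i(\bar x_S)\Big)\backslash f(\bar x_S)\quad\text{for } S\in\tbinom{[m]}{k+1},$$ $$r_{k+1}(x_1,\ldots,x_m)=\prod_{i=1}^{N}\ \prod_{\substack{S\in\binom{[m]}{k+1}\\ t_S(\bar b_{\restriction S})=a_i}} t_S(\bar x_{\restriction S}),$$ where the inner product is taken in an arbitrary fixed order of the sets $S$ (and $t_\emptyset:=0$). Then: (1) for every $S\subseteq[m]$, the $|S|$-ary polynomial $t_S$ is $0$-absorbing; (2) for every $S\subseteq[m]$ with $|S|=k$, $f(\bar x_S)=\prod_{i=0}^{k} r_i(\bar x_S)$ for all values of the variables; in particular $f(x_1,\ldots,x_m)=\prod_{i=0}^{m} r_i(x_1,\ldots,x_m)$ for all $x_1,\ldots,x_m\in A$; (3) if $n$ is a positive integer such that for every $k\ge n$ every $0$-absorbing $k$-ary polynomial of $\mathbf{A}$ is the constant function $0$ (which holds when $\mathbf{A}$ is supernilpotent of the appropriate degree $n$), then $r_k$ is the constant function $0$ for every $k\ge n$.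
   Context: A polynomial of an algebra $\mathbf{A}$ is a term built from variables and constants from $A$ using the basic operations of $\mathbf{A}$; $\operatorname{Pol}_m(\mathbf{A})$ denotes the $m$-ary polynomial operations. A Mal'cev term $m$ satisfies $m(y,x,x)=m(x,x,y)=y$. Nilpotency refers to the term-condition (commutator-theoretic) notion. It is a known fact that for a nilpotent algebra with Mal'cev term $m$ and any $0\in A$, $x\cdot y:=m(x,0,y)$ is a loop multiplication with neutral element $0$ (every equation $x\cdot z=y$ and $z\cdot x=y$ has a unique solution $z$), and the left division $x\backslash y$ (the unique $z$ with $x\cdot z=y$) and right division $y/x$ (the unique $z$ with $z\cdot x=y$) are polynomial operations of $\mathbf{A}$. $\prod_{i=1}^n x_i$ denotes the left-associated product $(\cdots((x_1\cdot x_2)\cdot x_3)\cdots)\cdot x_n$. $[m]=\{1,\ldots,m\}$, $\binom{[m]}{k}=\{S\subseteq[m]:|S|=k\}$. For $\bar x=(x_1,\ldots,x_m)$ and $S\subseteq[m]$, $\bar x_S$ is the $m$-tuple whose $i$-th entry is $x_i$ if $i\in S$ and $0$ otherwise, and $\bar x_{\restriction S}$ is the $|S|$-tuple $(x_i)_{i\in S}$. A polynomial $g(x_1,\ldots,x_k)$ is $0$-absorbing if $g(y_1,\ldots,y_k)=0$ whenever $y_i=0$ for some $i$. *)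

theory Defs
  imports Main
begin

definition algebra :: "'a set \<Rightarrow> (nat \<times> ('a list \<Rightarrow> 'a)) set \<Rightarrow> bool" where
  "algebra A F \<longleftrightarrow> A \<noteq> {} \<and>
     (\<forall>(n, g) \<in> F. \<forall>xs. length xs = n \<longrightarrow> set xs \<subseteq> A \<longrightarrow> g xs \<in> A)"

inductive_set clo :: "(nat \<times> ('a list \<Rightarrow> 'a)) set \<Rightarrow> nat \<Rightarrow> ('a list \<Rightarrow> 'a) set"
  for F k where
  proj: "i < k \<Longrightarrow> (\<lambda>xs. xs ! i) \<in> clo F k"
| app: "(n, g) \<in> F \<Longrightarrow> length ts = n \<Longrightarrow> (\<forall>t \<in> set ts. t \<in> clo F k)
          \<Longrightarrow> (\<lambda>xs. g (map (\<lambda>t. t xs) ts)) \<in> clo F k"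

inductive_set pol :: "'a set \<Rightarrow> (nat \<times> ('a list \<Rightarrow> 'a)) set \<Rightarrow> nat \<Rightarrow> ('a list \<Rightarrow> 'a) set"
  for A F k where
  proj: "i < k \<Longrightarrow> (\<lambda>xs. xs ! i) \<in> pol A F k"
| const: "c \<in> A \<Longrightarrow> (\<lambda>xs. c) \<in> pol A F k"
| app: "(n, g) \<in> F \<Longrightarrow> length ts = n \<Longrightarrow> (\<forall>t \<in> set ts. t \<in> pol A F k)
          \<Longrightarrow> (\<lambda>xs. g (map (\<lambda>t. t xs) ts)) \<in> pol A F k"

definition is_term_op :: "'a set \<Rightarrow> (nat \<times> ('a list \<Rightarrow> 'a)) set \<Rightarrow> nat \<Rightarrow> ('a list \<Rightarrow> 'a) \<Rightarrow> bool" where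
  "is_term_op A F k g \<longleftrightarrow>
     (\<exists>t \<in> clo F k. \<forall>xs. length xs = k \<longrightarrow> set xs \<subseteq> A \<longrightarrow> g xs = t xs)"

definition is_pol :: "'a set \<Rightarrow> (nat \<times> ('a list \<Rightarrow> 'a)) set \<Rightarrow> nat \<Rightarrow> ('a list \<Rightarrow> 'a) \<Rightarrow> bool" where
  "is_pol A F k g \<longleftrightarrow>
     (\<exists>t \<in> pol A F k. \<forall>xs. length xs = k \<longrightarrow> set xs \<subseteq> A \<longrightarrow> g xs = t xs)"

definition congruence :: "'a set \<Rightarrow> (nat \<times> ('a list \<Rightarrow> 'a)) set \<Rightarrow> ('a \<times> 'a) set \<Rightarrow> bool" where
  "congruence A F \<theta> \<longleftrightarrow> equiv A \<theta> \<and>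
     (\<forall>(n, g) \<in> F. \<forall>xs ys. length xs = n \<longrightarrow> length ys = n \<longrightarrow>
        list_all2 (\<lambda>x y. (x, y) \<in> \<theta>) xs ys \<longrightarrow> (g xs, g ys) \<in> \<theta>)"

definition centralizes ::
  "'a set \<Rightarrow> (nat \<times> ('a list \<Rightarrow> 'a)) set \<Rightarrow> ('a \<times> 'a) set \<Rightarrow> ('a \<times> 'a) set \<Rightarrow> ('a \<times> 'a) set \<Rightarrow> bool" where
  "centralizes A F \<alpha> \<beta> \<delta> \<longleftrightarrow>
     (\<forall>p q t as bs cs ds. t \<in> clo F (p + q) \<longrightarrow>
        length as = p \<longrightarrow> length bs = p \<longrightarrow> length cs = q \<longrightarrow> length ds = q \<longrightarrow>
        list_all2 (\<lambda>x y. (x, y) \<in> \<alpha>) as bs \<longrightarrow>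
        list_all2 (\<lambda>x y. (x, y) \<in> \<beta>) cs ds \<longrightarrow>
        (t (as @ cs), t (as @ ds)) \<in> \<delta> \<longrightarrow> (t (bs @ cs), t (bs @ ds)) \<in> \<delta>)"

definition commutator ::
  "'a set \<Rightarrow> (nat \<times> ('a list \<Rightarrow> 'a)) set \<Rightarrow> ('a \<times> 'a) set \<Rightarrow> ('a \<times> 'a) set \<Rightarrow> ('a \<times> 'a) set" where
  "commutator A F \<alpha> \<beta> = \<Inter>{\<delta>. congruence A F \<delta> \<and> centralizes A F \<alpha> \<beta> \<delta>}"

fun lower_central :: "'a set \<Rightarrow> (nat \<times> ('a list \<Rightarrow> 'a)) set \<Rightarrow> nat \<Rightarrow> ('a \<times> 'a) set" where
  "lower_central A F 0 = A \<times> A"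
| "lower_central A F (Suc n) = commutator A F (A \<times> A) (lower_central A F n)"

definition nilpotent :: "'a set \<Rightarrow> (nat \<times> ('a list \<Rightarrow> 'a)) set \<Rightarrow> bool" where
  "nilpotent A F \<longleftrightarrow> (\<exists>n. lower_central A F n = Id_on A)"

definition malcev_term :: "'a set \<Rightarrow> (nat \<times> ('a list \<Rightarrow> 'a)) set \<Rightarrow> ('a list \<Rightarrow> 'a) \<Rightarrow> bool" where
  "malcev_term A F mal \<longleftrightarrow> is_term_op A F 3 mal \<and>
     (\<forall>x \<in> A. \<forall>y \<in> A. mal [y, x, x] = y \<and> mal [x, x, y] = y)"

section \<open>Loop operations associated with 0 (written e)\<close>

definition lmul :: "('a list \<Rightarrow> 'a) \<Rightarrow> 'a \<Rightarrow> 'a \<Rightarrow> 'a \<Rightarrow> 'a" where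
  "lmul mal e x y = mal [x, e, y]"

definition ldiv :: "'a set \<Rightarrow> ('a list \<Rightarrow> 'a) \<Rightarrow> 'a \<Rightarrow> 'a \<Rightarrow> 'a \<Rightarrow> 'a" where
  "ldiv A mal e x y = (THE z. z \<in> A \<and> lmul mal e x z = y)"

definition prodL :: "('a list \<Rightarrow> 'a) \<Rightarrow> 'a \<Rightarrow> 'a list \<Rightarrow> 'a" where
  "prodL mal e xs = foldl (lmul mal e) e xs"

definition zero_absorbing :: "'a set \<Rightarrow> 'a \<Rightarrow> nat \<Rightarrow> ('a list \<Rightarrow> 'a) \<Rightarrow> bool" where
  "zero_absorbing A e k g \<longleftrightarrow>
     (\<forall>ys. length ys = k \<longrightarrow> set ys \<subseteq> A \<longrightarrow> e \<in> set ys \<longrightarrow> g ys = e)"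

section \<open>Tuples: indices are 0,...,m-1\<close>

definition sub0 :: "nat \<Rightarrow> 'a \<Rightarrow> nat set \<Rightarrow> 'a list \<Rightarrow> 'a list" where
  "sub0 m e S xs = map (\<lambda>i. if i \<in> S then xs ! i else e) [0..<m]"

definition restr :: "nat set \<Rightarrow> 'a list \<Rightarrow> 'a list" where
  "restr S xs = map (\<lambda>i. xs ! i) (sorted_list_of_set S)"

definition spread :: "nat \<Rightarrow> 'a \<Rightarrow> nat set \<Rightarrow> 'a list \<Rightarrow> 'a list" where
  "spread m e S ys = map (\<lambda>i. if i \<in> S then ys ! card {j \<in> S. j < i} else e) [0..<m]"

text \<open>t_S as |S|-ary function, given the list rs = [r_0, ..., r_k] (|S| = k+1).\<close>
definition tfun :: "'a set \<Rightarrow> ('a list \<Rightarrow> 'a) \<Rightarrow> 'a \<Rightarrow> ('a list \<Rightarrow> 'a) \<Rightarrow> nat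
     \<Rightarrow> ('a list \<Rightarrow> 'a) list \<Rightarrow> nat set \<Rightarrow> 'a list \<Rightarrow> 'a" where
  "tfun A mal e f m rs S ys =
     ldiv A mal e (prodL mal e (map (\<lambda>r. r (spread m e S ys)) rs)) (f (spread m e S ys))"

text \<open>rlist ... k = [r_0, ..., r_k]. ordS k is the fixed enumeration of the (k+1)-subsets;
as is the enumeration a_1..a_N of A; b is the tuple b-bar.\<close>
primrec rlist :: "'a set \<Rightarrow> ('a list \<Rightarrow> 'a) \<Rightarrow> 'a \<Rightarrow> ('a list \<Rightarrow> 'a) \<Rightarrow> nat \<Rightarrow> 'a list
     \<Rightarrow> 'a list \<Rightarrow> (nat \<Rightarrow> nat set list) \<Rightarrow> nat \<Rightarrow> ('a list \<Rightarrow> 'a) list" where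
  "rlist A mal e f m as b ordS 0 = [\<lambda>xs. f (replicate m e)]"
| "rlist A mal e f m as b ordS (Suc k) =
     (let rs = rlist A mal e f m as b ordS k in
      rs @ [\<lambda>xs. prodL mal e
               (map (\<lambda>a. prodL mal e
                   (map (\<lambda>S. tfun A mal e f m rs S (restr S xs))
                      (filter (\<lambda>S. tfun A mal e f m rs S (restr S b) = a) (ordS k))))
                 as)])"

definition rr :: "'a set \<Rightarrow> ('a list \<Rightarrow> 'a) \<Rightarrow> 'a \<Rightarrow> ('a list \<Rightarrow> 'a) \<Rightarrow> nat \<Rightarrow> 'a list
     \<Rightarrow> 'a list \<Rightarrow> (nat \<Rightarrow> nat set list) \<Rightarrow> nat \<Rightarrow> 'a list \<Rightarrow> 'a" where
  "rr A mal e f m as b ordS k = rlist A mal e f m as b ordS k ! k"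

definition tt :: "'a set \<Rightarrow> ('a list \<Rightarrow> 'a) \<Rightarrow> 'a \<Rightarrow> ('a list \<Rightarrow> 'a) \<Rightarrow> nat \<Rightarrow> 'a list
     \<Rightarrow> 'a list \<Rightarrow> (nat \<Rightarrow> nat set list) \<Rightarrow> nat set \<Rightarrow> 'a list \<Rightarrow> 'a" where
  "tt A mal e f m as b ordS S =
     (if S = {} then (\<lambda>ys. e)
      else tfun A mal e f m (rlist A mal e f m as b ordS (card S - 1)) S)"

end

theory Submission
  imports Defs "HOL-Combinatorics.Cycles"
begin

text \<open>For x \<in> A the left translation y \<mapsto> x \<cdot> y = m(x,0,y) is injective: if x \<cdot> y = x \<cdot> y',
  the term condition lets one replace x by 0 modulo each term of the lower central series, so
  (y, y') lies in every one of them, hence in the trivial one. On the finite set A the left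
  translations are therefore permutations, a common power of them inverts all of them, and the
  left division is a polynomial.

  The decomposition is proved by induction on k: suppose f agrees with r_0 \<cdot> \<dots> \<cdot> r_k on all
  tuples x_S with |S| \<le> k. Then t_S absorbs 0 for |S| = k+1, since a zero argument of t_S
  turns its spread into such a tuple. Consequently, on x_S with |S| = k+1 every factor of
  r_{k+1} except t_S vanishes, and r_0 \<cdot> \<dots> \<cdot> r_{k+1} = (r_0 \<cdot> \<dots> \<cdot> r_k) \<cdot> ((r_0 \<cdot> \<dots> \<cdot> r_k) \<setminus> f)
  equals f there. Finally, if
  0-absorbing polynomials of arity \<ge> n vanish, so do all factors t_S of r_k for k \<ge> n.\<close>

lemma algebra_op_closed:
  assumes "algebra A F" "(n, g) \<in> F" "length xs = n" "set xs \<subseteq> A"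
  shows "g xs \<in> A"
  using assms unfolding algebra_def by fastforce

lemma pol_closed:
  assumes "algebra A F"
  shows "t \<in> pol A F k \<Longrightarrow> length xs = k \<Longrightarrow> set xs \<subseteq> A \<Longrightarrow> t xs \<in> A"
proof (induction t rule: pol.induct)
  case (app n g ts)
  then have "set (map (\<lambda>t. t xs) ts) \<subseteq> A" by auto
  then show ?case using algebra_op_closed[OF assms app(1)] app(2) by simp
qed auto

lemma clo_closed:
  assumes "algebra A F"
  shows "t \<in> clo F k \<Longrightarrow> length xs = k \<Longrightarrow> set xs \<subseteq> A \<Longrightarrow> t xs \<in> A"
proof (induction t rule: clo.induct)
  case (app n g ts)
  then have "set (map (\<lambda>t. t xs) ts) \<subseteq> A" by auto
  then show ?case using algebra_op_closed[OF assms app(1)] app(2) by simp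
qed auto

lemma clo_subset_pol: "t \<in> clo F k \<Longrightarrow> t \<in> pol A F k"
  by (induction t rule: clo.induct) (auto intro: pol.intros)

lemma pol_subst:
  assumes "t \<in> pol A F n"
  shows "length ps = n \<Longrightarrow> \<forall>p\<in>set ps. p \<in> pol A F k \<Longrightarrow> (\<lambda>xs. t (map (\<lambda>p. p xs) ps)) \<in> pol A F k"
  using assms
proof (induction t rule: pol.induct)
  case (app n' g ts)
  have "(\<lambda>xs. g (map (\<lambda>t. t xs) (map (\<lambda>t xs. t (map (\<lambda>p. p xs) ps)) ts))) \<in> pol A F k"
    by (rule pol.app) (use app in auto)
  then show ?case by (simp add: comp_def)
qed (auto intro: pol.const)

lemma is_pol_closed:
  assumes "algebra A F" "is_pol A F k p" "length xs = k" "set xs \<subseteq> A"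
  shows "p xs \<in> A"
  using assms pol_closed unfolding is_pol_def by metis

lemma is_pol_cong:
  assumes "is_pol A F k p" "\<And>xs. length xs = k \<Longrightarrow> set xs \<subseteq> A \<Longrightarrow> q xs = p xs"
  shows "is_pol A F k q"
  using assms unfolding is_pol_def by metis

lemma is_pol_proj: "i < k \<Longrightarrow> is_pol A F k (\<lambda>xs. xs ! i)"
  unfolding is_pol_def by (rule bexI[OF _ pol.proj]) auto

lemma is_pol_const: "c \<in> A \<Longrightarrow> is_pol A F k (\<lambda>xs. c)"
  unfolding is_pol_def by (rule bexI[OF _ pol.const]) auto

lemma is_pol_compose:
  assumes alg: "algebra A F" and g: "is_pol A F n g" and len: "length ps = n"
    and ps: "\<forall>p\<in>set ps. is_pol A F k p"
  shows "is_pol A F k (\<lambda>xs. g (map (\<lambda>p. p xs) ps))"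
proof -
  obtain t where t: "t \<in> pol A F n" "\<forall>xs. length xs = n \<longrightarrow> set xs \<subseteq> A \<longrightarrow> g xs = t xs"
    using g unfolding is_pol_def by blast
  have "\<forall>p\<in>set ps. \<exists>q. q \<in> pol A F k \<and> (\<forall>xs. length xs = k \<longrightarrow> set xs \<subseteq> A \<longrightarrow> p xs = q xs)"
    using ps unfolding is_pol_def by blast
  then obtain Q where Q: "\<And>p. p \<in> set ps \<Longrightarrow>
      Q p \<in> pol A F k \<and> (\<forall>xs. length xs = k \<longrightarrow> set xs \<subseteq> A \<longrightarrow> p xs = Q p xs)"
    by metis
  have "(\<lambda>xs. t (map (\<lambda>q. q xs) (map Q ps))) \<in> pol A F k"
    by (rule pol_subst[OF t(1)]) (use len Q in auto)
  moreover have "g (map (\<lambda>p. p xs) ps) = t (map (\<lambda>q. q xs) (map Q ps))"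
    if "length xs = k" "set xs \<subseteq> A" for xs
  proof -
    have "set (map (\<lambda>p. p xs) ps) \<subseteq> A"
      using is_pol_closed[OF alg _ that] ps by auto
    then have "g (map (\<lambda>p. p xs) ps) = t (map (\<lambda>p. p xs) ps)" using t(2) len by auto
    also have "\<dots> = t (map (\<lambda>q. q xs) (map Q ps))"
      by (rule arg_cong[where f = t]) (use Q that in auto)
    finally show ?thesis .
  qed
  ultimately show ?thesis
    unfolding is_pol_def by (intro bexI[where x = "\<lambda>xs. t (map (\<lambda>q. q xs) (map Q ps))"]) auto
qed

lemma centralizesD:
  assumes "centralizes A F \<alpha> \<beta> \<delta>" "t \<in> clo F (p + q)"
    "length as = p" "length bs = p" "length cs = q" "length ds = q"
    "list_all2 (\<lambda>x y. (x, y) \<in> \<alpha>) as bs" "list_all2 (\<lambda>x y. (x, y) \<in> \<beta>) cs ds"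
    "(t (as @ cs), t (as @ ds)) \<in> \<delta>"
  shows "(t (bs @ cs), t (bs @ ds)) \<in> \<delta>"
  using assms unfolding centralizes_def by blast

lemma Id_on_subset_commutator: "Id_on A \<subseteq> commutator A F \<alpha> \<beta>"
  unfolding commutator_def congruence_def equiv_def refl_on_def by auto

lemma centralizes_commutator: "centralizes A F \<alpha> \<beta> (commutator A F \<alpha> \<beta>)"
  unfolding commutator_def centralizes_def by blast

lemma nilpotent_term_cancel:
  assumes alg: "algebra A F" and nil: "nilpotent A F" and t: "t \<in> clo F (p + 1)"
    and as: "length as = p" "set as \<subseteq> A" and bs: "length bs = p" "set bs \<subseteq> A"
    and y: "y \<in> A" "y' \<in> A" and eq: "t (as @ [y]) = t (as @ [y'])"
    and unit: "\<And>z. z \<in> A \<Longrightarrow> t (bs @ [z]) = z"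
  shows "y = y'"
proof -
  have "(y, y') \<in> lower_central A F i" for i
  proof (induction i)
    case 0
    show ?case using y by simp
  next
    case (Suc i)
    let ?C = "lower_central A F (Suc i)"
    have "t (as @ [y]) \<in> A" using clo_closed[OF alg t] as y by simp
    then have "(t (as @ [y]), t (as @ [y'])) \<in> ?C"
      using eq Id_on_subset_commutator by fastforce
    moreover have "list_all2 (\<lambda>x y. (x, y) \<in> A \<times> A) as bs"
      using as bs by (auto simp: list_all2_conv_all_nth set_conv_nth)
    moreover have "list_all2 (\<lambda>x y. (x, y) \<in> lower_central A F i) [y] [y']" using Suc by simp
    ultimately have "(t (bs @ [y]), t (bs @ [y'])) \<in> ?C"
      using centralizesD[OF centralizes_commutator t] as bs by simp
    then show ?case using unit y by simp
  qed
  moreover obtain n where "lower_central A F n = Id_on A" using nil unfolding nilpotent_def by blast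
  ultimately have "(y, y') \<in> Id_on A" by metis
  then show ?thesis by blast
qed

lemma funpow_period_mult:
  assumes "(g ^^ n) x = x"
  shows "(g ^^ (n * k)) x = x"
  unfolding funpow_mult[symmetric] by (induction k) (simp_all add: assms)

lemma inj_on_funpow_period:
  assumes "finite A" "inj_on g A" "g ` A \<subseteq> A"
  obtains n where "n > 0" "\<And>x. x \<in> A \<Longrightarrow> (g ^^ n) x = x"
proof -
  define \<sigma> where "\<sigma> z = (if z \<in> A then g z else z)" for z
  have "bij_betw g A A"
    using endo_inj_surj[OF assms(1,3,2)] assms(2) by (simp add: bij_betw_def)
  then have "bij_betw \<sigma> A A" by (rule bij_betw_cong[THEN iffD1, rotated]) (simp add: \<sigma>_def)
  then have "\<sigma> permutes A" by (rule bij_imp_permutes) (simp add: \<sigma>_def)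
  then obtain n where n: "\<sigma> ^^ n = id" "n > 0"
    using assms(1) permutation_permutes permutation_is_nilpotent by blast
  have "(\<sigma> ^^ j) x = (g ^^ j) x \<and> (g ^^ j) x \<in> A" if "x \<in> A" for j x
    using that assms(3) by (induction j) (auto simp: \<sigma>_def)
  then show ?thesis using that n by (metis id_apply)
qed

lemma common_funpow_period:
  assumes "finite I" "finite A" "\<And>i. i \<in> I \<Longrightarrow> inj_on (g i) A \<and> g i ` A \<subseteq> A"
  obtains n where "n > 0" "\<And>i x. i \<in> I \<Longrightarrow> x \<in> A \<Longrightarrow> (g i ^^ n) x = x"
  using assms(1,3)
proof (induction I arbitrary: thesis rule: finite_induct)
  case empty
  show ?case by (rule empty.prems(1)[of 1]) simp_all
next
  case (insert i I)
  obtain n where n: "n > 0" "\<And>j x. j \<in> I \<Longrightarrow> x \<in> A \<Longrightarrow> (g j ^^ n) x = x"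
    using insert.IH insert.prems(2) by blast
  obtain n' where n': "n' > 0" "\<And>x. x \<in> A \<Longrightarrow> (g i ^^ n') x = x"
    using inj_on_funpow_period[OF assms(2)] insert.prems(2) by blast
  show ?case
  proof (rule insert.prems(1)[of "n * n'"])
    show "n * n' > 0" using n n' by simp
    fix j x assume "j \<in> insert i I" "x \<in> A"
    then show "(g j ^^ (n * n')) x = x"
      using n n' funpow_period_mult[where g = "g i" and n = n' and k = n]
        funpow_period_mult[where g = "g j" and n = n and k = n']
      by (auto simp: mult.commute)
  qed
qed

locale finite_nilpotent_malcev_algebra =
  fixes A :: "'a set" and F :: "(nat \<times> ('a list \<Rightarrow> 'a)) set" and mal :: "'a list \<Rightarrow> 'a" and e :: 'a
  assumes alg: "algebra A F" and fin: "finite A" and nil: "nilpotent A F"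
    and malcev: "malcev_term A F mal" and zero: "e \<in> A"
begin

lemma is_pol_malcev: "is_pol A F 3 mal"
  using malcev clo_subset_pol unfolding malcev_term_def is_term_op_def is_pol_def by blast

lemma is_pol_lmul:
  assumes "is_pol A F k P" "is_pol A F k Q"
  shows "is_pol A F k (\<lambda>xs. lmul mal e (P xs) (Q xs))"
proof -
  have "is_pol A F k (\<lambda>xs. mal (map (\<lambda>p. p xs) [P, \<lambda>xs. e, Q]))"
    by (rule is_pol_compose[OF alg is_pol_malcev]) (simp_all add: assms is_pol_const[OF zero])
  then show ?thesis by (simp add: lmul_def)
qed

lemma lmul_closed: "x \<in> A \<Longrightarrow> y \<in> A \<Longrightarrow> lmul mal e x y \<in> A"
  using is_pol_closed[OF alg is_pol_malcev, of "[x, e, y]"] zero unfolding lmul_def by simp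

lemma lmul_zero_right: "x \<in> A \<Longrightarrow> lmul mal e x e = x"
  using malcev zero unfolding malcev_term_def lmul_def by blast

lemma lmul_zero_left: "y \<in> A \<Longrightarrow> lmul mal e e y = y"
  using malcev zero unfolding malcev_term_def lmul_def by blast

lemma lmul_left_cancel:
  assumes "x \<in> A" "y \<in> A" "y' \<in> A" "lmul mal e x y = lmul mal e x y'"
  shows "y = y'"
proof -
  obtain t where t: "t \<in> clo F 3" "\<And>xs. length xs = 3 \<Longrightarrow> set xs \<subseteq> A \<Longrightarrow> mal xs = t xs"
    using malcev unfolding malcev_term_def is_term_op_def by blast
  show ?thesis
  proof (rule nilpotent_term_cancel[OF alg nil, of t 2 "[x, e]" "[e, e]"])
    show "t \<in> clo F (2 + 1)" using t(1) by simp
    show "t ([x, e] @ [y]) = t ([x, e] @ [y'])"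
      using assms t(2)[of "[x, e, y]"] t(2)[of "[x, e, y']"] zero by (simp add: lmul_def)
    show "t ([e, e] @ [z]) = z" if "z \<in> A" for z
      using lmul_zero_left[OF that] t(2)[of "[e, e, z]"] that zero by (simp add: lmul_def)
  qed (use assms zero in auto)
qed

lemma lmul_bij:
  assumes "x \<in> A"
  shows "bij_betw (lmul mal e x) A A"
proof -
  have "inj_on (lmul mal e x) A" using lmul_left_cancel assms by (auto intro: inj_onI)
  moreover have "lmul mal e x ` A \<subseteq> A" using lmul_closed assms by auto
  ultimately show ?thesis using endo_inj_surj[OF fin] by (simp add: bij_betw_def)
qed

lemma
  assumes x: "x \<in> A" and y: "y \<in> A"
  shows ldiv_closed: "ldiv A mal e x y \<in> A"
    and lmul_ldiv: "lmul mal e x (ldiv A mal e x y) = y"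
proof -
  obtain z where "z \<in> A" "lmul mal e x z = y"
    using lmul_bij[OF x] y by (metis bij_betw_def imageE)
  then have "\<exists>!z. z \<in> A \<and> lmul mal e x z = y"
    using lmul_left_cancel[OF x] by blast
  from theI'[OF this] show "ldiv A mal e x y \<in> A" "lmul mal e x (ldiv A mal e x y) = y"
    unfolding ldiv_def by simp_all
qed

lemma ldiv_lmul:
  assumes "x \<in> A" "z \<in> A"
  shows "ldiv A mal e x (lmul mal e x z) = z"
  using lmul_left_cancel[OF assms(1) ldiv_closed[OF assms(1) lmul_closed[OF assms]] assms(2)]
    lmul_ldiv[OF assms(1) lmul_closed[OF assms]] by simp

lemma ldiv_self: "x \<in> A \<Longrightarrow> ldiv A mal e x x = e"
  using ldiv_lmul[of x e] lmul_zero_right zero by simp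

lemma ldiv_eq_funpow_lmul:
  obtains K where "\<And>x y. x \<in> A \<Longrightarrow> y \<in> A \<Longrightarrow> ldiv A mal e x y = (lmul mal e x ^^ K) y"
proof -
  obtain n where n: "n > 0" "\<And>x y. x \<in> A \<Longrightarrow> y \<in> A \<Longrightarrow> (lmul mal e x ^^ n) y = y"
    using common_funpow_period[OF fin fin, of "lmul mal e"] lmul_bij
    by (metis bij_betw_def order_refl)
  have "ldiv A mal e x y = (lmul mal e x ^^ (n - 1)) y" if "x \<in> A" "y \<in> A" for x y
  proof -
    have closed: "(lmul mal e x ^^ j) y \<in> A" for j
      using that by (induction j) (auto intro: lmul_closed)
    have "lmul mal e x ((lmul mal e x ^^ (n - 1)) y) = (lmul mal e x ^^ n) y"
      using n(1) by (metis Suc_pred' funpow.simps(2) o_apply)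
    then show ?thesis
      using n(2) that lmul_ldiv ldiv_closed closed lmul_left_cancel by metis
  qed
  then show ?thesis using that by blast
qed

lemma is_pol_ldiv:
  assumes P: "is_pol A F k P" and Q: "is_pol A F k Q"
  shows "is_pol A F k (\<lambda>xs. ldiv A mal e (P xs) (Q xs))"
proof -
  obtain K where K: "\<And>x y. x \<in> A \<Longrightarrow> y \<in> A \<Longrightarrow> ldiv A mal e x y = (lmul mal e x ^^ K) y"
    using ldiv_eq_funpow_lmul by blast
  have "is_pol A F k (\<lambda>xs. (lmul mal e (P xs) ^^ j) (Q xs))" for j
    by (induction j) (simp_all add: Q is_pol_lmul[OF P])
  then show ?thesis
    by (rule is_pol_cong) (simp add: K is_pol_closed[OF alg P] is_pol_closed[OF alg Q])
qed

lemma prodL_Nil [simp]: "prodL mal e [] = e"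
  unfolding prodL_def by simp

lemma prodL_snoc: "prodL mal e (xs @ [y]) = lmul mal e (prodL mal e xs) y"
  unfolding prodL_def by simp

lemma prodL_closed: "set xs \<subseteq> A \<Longrightarrow> prodL mal e xs \<in> A"
  by (induction xs rule: rev_induct) (simp_all add: prodL_snoc lmul_closed zero)

lemma prodL_all_zero: "\<forall>x\<in>set xs. x = e \<Longrightarrow> prodL mal e xs = e"
  by (induction xs rule: rev_induct) (simp_all add: prodL_snoc lmul_zero_right zero)

lemma prodL_map_single:
  assumes "distinct L" "\<forall>S\<in>set L. g S \<in> A" "\<forall>S\<in>set L. S \<noteq> S0 \<longrightarrow> g S = e"
  shows "prodL mal e (map g L) = (if S0 \<in> set L then g S0 else e)"
  using assms
proof (induction L rule: rev_induct)
  case (snoc S L)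
  have closed: "prodL mal e (map g L) \<in> A" using snoc.prems(2) by (intro prodL_closed) auto
  have IH: "prodL mal e (map g L) = (if S0 \<in> set L then g S0 else e)"
    using snoc.IH snoc.prems by simp
  show ?case
  proof (cases "S = S0")
    case True
    then have "S0 \<notin> set L" using snoc.prems(1) by simp
    then show ?thesis using IH True snoc.prems(2) by (simp add: prodL_snoc lmul_zero_left)
  next
    case False
    then show ?thesis using IH closed snoc.prems(3) by (simp add: prodL_snoc lmul_zero_right)
  qed
qed simp

lemma is_pol_prodL:
  "(\<And>x. x \<in> set xs \<Longrightarrow> is_pol A F k (g x)) \<Longrightarrow> is_pol A F k (\<lambda>ys. prodL mal e (map (\<lambda>x. g x ys) xs))"
proof (induction xs rule: rev_induct)
  case Nil
  then show ?case using is_pol_const[OF zero] by simp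
next
  case (snoc x xs)
  then show ?case by (simp add: prodL_snoc is_pol_lmul)
qed

end

lemma card_smaller_nth_sorted_list_of_set:
  assumes "finite S" "p < card S"
  shows "card {j \<in> S. j < sorted_list_of_set S ! p} = p"
proof -
  let ?L = "sorted_list_of_set S"
  have sorted: "sorted_wrt (<) ?L" by (simp add: strict_sorted_list_of_set)
  have len: "length ?L = card S" by simp
  have "{j \<in> S. j < ?L ! p} = set (take p ?L)"
  proof (rule set_eqI, rule iffI)
    fix j assume "j \<in> {j \<in> S. j < ?L ! p}"
    then have "j \<in> set ?L" "j < ?L ! p" using assms(1) by auto
    then obtain q where q: "q < length ?L" "?L ! q = j" "j < ?L ! p"
      unfolding in_set_conv_nth by blast
    have "q < p"
      using sorted_wrt_nth_less[OF sorted, of p q] q assms(2) len by (cases "p \<le> q") fastforce+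
    then show "j \<in> set (take p ?L)" using q assms(2) len by (auto simp: in_set_conv_nth)
  next
    fix j assume "j \<in> set (take p ?L)"
    then obtain q where q: "q < p" "?L ! q = j" using assms(2) len by (auto simp: in_set_conv_nth)
    then have "?L ! q \<in> S" using assms len by (metis less_trans nth_mem set_sorted_list_of_set)
    moreover have "?L ! q < ?L ! p" using sorted_wrt_nth_less[OF sorted, of q p] assms(2) len q by simp
    ultimately show "j \<in> {j \<in> S. j < ?L ! p}" using q by simp
  qed
  then show ?thesis using assms(2) len by (simp add: distinct_card)
qed

lemma
  assumes "finite S" "i \<in> S"
  shows card_smaller_less_card: "card {j \<in> S. j < i} < card S"
    and nth_sorted_list_of_set_card_smaller: "sorted_list_of_set S ! card {j \<in> S. j < i} = i"
proof -
  obtain p where p: "p < card S" and i: "sorted_list_of_set S ! p = i"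
    using assms by (metis in_set_conv_nth length_sorted_list_of_set set_sorted_list_of_set)
  have "card {j \<in> S. j < i} = p" using card_smaller_nth_sorted_list_of_set[OF assms(1) p] i by simp
  then show "card {j \<in> S. j < i} < card S" "sorted_list_of_set S ! card {j \<in> S. j < i} = i"
    using p i by simp_all
qed

lemma length_restr [simp]: "length (restr S xs) = card S"
  unfolding restr_def by simp

lemma length_sub0 [simp]: "length (sub0 m e S xs) = m"
  unfolding sub0_def by simp

lemma length_spread [simp]: "length (spread m e S ys) = m"
  unfolding spread_def by simp

lemma set_restr: "finite S \<Longrightarrow> set (restr S xs) = (\<lambda>i. xs ! i) ` S"
  unfolding restr_def by simp

lemma nth_sub0: "i < m \<Longrightarrow> sub0 m e S xs ! i = (if i \<in> S then xs ! i else e)"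
  unfolding sub0_def by simp

lemma nth_spread:
  "i < m \<Longrightarrow> spread m e S ys ! i = (if i \<in> S then ys ! card {j \<in> S. j < i} else e)"
  unfolding spread_def by simp

lemma sub0_sub0: "length xs = m \<Longrightarrow> sub0 m e S' (sub0 m e S xs) = sub0 m e (S' \<inter> S) xs"
  by (rule nth_equalityI) (auto simp: nth_sub0)

lemma sub0_full: "length xs = m \<Longrightarrow> sub0 m e {0..<m} xs = xs"
  by (rule nth_equalityI) (auto simp: nth_sub0)

lemma sub0_empty: "sub0 m e {} xs = replicate m e"
  by (rule nth_equalityI) (simp_all add: nth_sub0)

lemma spread_restr:
  assumes S: "S \<subseteq> {0..<m}"
  shows "spread m e S (restr S xs) = sub0 m e S xs"
proof (rule nth_equalityI)
  fix i assume "i < length (spread m e S (restr S xs))"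
  then have i: "i < m" by simp
  have fin: "finite S" using finite_subset[OF S finite_atLeastLessThan] .
  show "spread m e S (restr S xs) ! i = sub0 m e S xs ! i"
  proof (cases "i \<in> S")
    case True
    then show ?thesis
      using i card_smaller_less_card[OF fin True] nth_sorted_list_of_set_card_smaller[OF fin True]
      by (simp add: nth_spread nth_sub0 restr_def)
  next
    case False
    then show ?thesis using i by (simp add: nth_spread nth_sub0)
  qed
qed simp

lemma restr_spread:
  assumes S: "S \<subseteq> {0..<m}" and len: "length ys = card S"
  shows "restr S (spread m e S ys) = ys"
proof (rule nth_equalityI)
  fix p assume "p < length (restr S (spread m e S ys))"
  then have p: "p < card S" by simp
  have fin: "finite S" using S finite_subset by blast
  let ?i = "sorted_list_of_set S ! p"
  have "?i \<in> S" using p fin by (metis length_sorted_list_of_set nth_mem set_sorted_list_of_set)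
  then show "restr S (spread m e S ys) ! p = ys ! p"
    using p S card_smaller_nth_sorted_list_of_set[OF fin p] by (auto simp: restr_def nth_spread)
qed (simp add: len)

lemma set_sub0_subset: "set xs \<subseteq> A \<Longrightarrow> length xs = m \<Longrightarrow> e \<in> A \<Longrightarrow> set (sub0 m e S xs) \<subseteq> A"
  unfolding sub0_def by (auto simp: set_conv_nth)

lemma set_restr_subset:
  assumes "S \<subseteq> {0..<m}" "length xs = m" "set xs \<subseteq> A"
  shows "set (restr S xs) \<subseteq> A"
proof -
  have "xs ! i \<in> A" if "i \<in> S" for i using that assms nth_mem by fastforce
  then show ?thesis
    by (simp add: set_restr[OF finite_subset[OF assms(1) finite_atLeastLessThan]] image_subset_iff)
qed

lemma set_spread_subset:
  assumes "S \<subseteq> {0..<m}" "length ys = card S" "set ys \<subseteq> A" "e \<in> A"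
  shows "set (spread m e S ys) \<subseteq> A"
proof
  fix x assume "x \<in> set (spread m e S ys)"
  then obtain i where "i < m" "x = spread m e S ys ! i" by (auto simp: in_set_conv_nth)
  moreover have "ys ! card {j \<in> S. j < i} \<in> A" if "i \<in> S"
    using card_smaller_less_card[OF finite_subset[OF assms(1) finite_atLeastLessThan] that] assms(2,3)
      nth_mem by fastforce
  ultimately show "x \<in> A" using assms(4) by (auto simp: nth_spread)
qed

lemma is_pol_spread:
  assumes alg: "algebra A F" and e: "e \<in> A" and S: "S \<subseteq> {0..<m}" and p: "is_pol A F m p"
  shows "is_pol A F (card S) (\<lambda>ys. p (spread m e S ys))"
proof -
  let ?qs = "map (\<lambda>i ys. if i \<in> S then ys ! card {j \<in> S. j < i} else e) [0..<m]"
  have "\<forall>q\<in>set ?qs. is_pol A F (card S) q"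
  proof
    fix q assume "q \<in> set ?qs"
    then obtain i where "i < m" "q = (\<lambda>ys. if i \<in> S then ys ! card {j \<in> S. j < i} else e)"
      by auto
    then show "is_pol A F (card S) q"
      using is_pol_proj[OF card_smaller_less_card[OF finite_subset[OF S finite_atLeastLessThan]]]
        is_pol_const[OF e] by (cases "i \<in> S") simp_all
  qed
  from is_pol_compose[OF alg p _ this] show ?thesis
    by (simp add: spread_def comp_def)
qed

lemma is_pol_restr:
  assumes alg: "algebra A F" and S: "S \<subseteq> {0..<m}" and p: "is_pol A F (card S) p"
  shows "is_pol A F m (\<lambda>xs. p (restr S xs))"
proof -
  let ?qs = "map (\<lambda>i (xs :: 'a list). xs ! i) (sorted_list_of_set S)"
  have "\<forall>q\<in>set ?qs. is_pol A F m q"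
  proof
    fix q assume "q \<in> set ?qs"
    then obtain i where "i \<in> S" "q = (\<lambda>xs. xs ! i)" using finite_subset[OF S finite_atLeastLessThan] by auto
    then have "i < m" using S by auto
    then show "is_pol A F m q" using \<open>q = (\<lambda>xs. xs ! i)\<close> is_pol_proj by simp
  qed
  from is_pol_compose[OF alg p _ this] show ?thesis
    by (simp add: restr_def comp_def)
qed

locale polynomial_decomposition = finite_nilpotent_malcev_algebra +
  fixes f :: "'a list \<Rightarrow> 'a" and m :: nat and as :: "'a list" and b :: "'a list"
    and ordS :: "nat \<Rightarrow> nat set list"
  assumes is_pol_f: "is_pol A F m f" and distinct_as: "distinct as" and set_as: "set as = A"
    and length_b: "length b = m" and set_b: "set b \<subseteq> A"
    and distinct_ordS: "distinct (ordS k)"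
    and set_ordS: "set (ordS k) = {S. S \<subseteq> {0..<m} \<and> card S = Suc k}"
begin

text \<open>Indices are shifted as in the definitions: R k = [r_0, ..., r_k], and t k S is the
  paper's t_S for |S| = k + 1, built from R k.\<close>

abbreviation "R k \<equiv> rlist A mal e f m as b ordS k"
abbreviation "r k \<equiv> rr A mal e f m as b ordS k"
abbreviation "t k S \<equiv> tfun A mal e f m (R k) S"

definition rprod :: "nat \<Rightarrow> 'a list \<Rightarrow> 'a" where
  "rprod k xs = prodL mal e (map (\<lambda>i. r i xs) [0..<Suc k])"

definition rprod_agrees :: "nat \<Rightarrow> bool" where
  "rprod_agrees k \<longleftrightarrow> (\<forall>S \<subseteq> {0..<m}. card S \<le> k \<longrightarrow> (\<forall>xs. length xs = m \<longrightarrow> set xs \<subseteq> A \<longrightarrow>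
     f (sub0 m e S xs) = rprod k (sub0 m e S xs)))"

lemma length_rlist: "length (R k) = Suc k"
  by (induction k) (simp_all add: Let_def)

lemma nth_rlist: "i \<le> k \<Longrightarrow> R k ! i = r i"
proof (induction k)
  case 0
  then show ?case by (simp add: rr_def)
next
  case (Suc k)
  then show ?case
    by (cases "i = Suc k") (simp_all add: rr_def Let_def nth_append length_rlist)
qed

lemma rlist_eq_map_rr: "R k = map r [0..<Suc k]"
  by (rule nth_equalityI) (simp_all add: length_rlist nth_rlist del: upt_Suc)

lemma rr_0: "r 0 xs = f (replicate m e)"
  by (simp add: rr_def)

lemma rr_Suc:
  "r (Suc k) xs = prodL mal e (map (\<lambda>a. prodL mal e (map (\<lambda>S. t k S (restr S xs))
      (filter (\<lambda>S. t k S (restr S b) = a) (ordS k)))) as)"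
  unfolding rr_def by (simp add: Let_def nth_append length_rlist)

lemma rprod_Suc: "rprod (Suc k) xs = lmul mal e (rprod k xs) (r (Suc k) xs)"
  unfolding rprod_def prodL_def by simp

lemma tfun_eq: "t k S ys = ldiv A mal e (rprod k (spread m e S ys)) (f (spread m e S ys))"
  unfolding tfun_def rprod_def rlist_eq_map_rr by (simp add: comp_def)

lemma is_pol_tfun:
  assumes "is_pol A F m (rprod k)" "S \<subseteq> {0..<m}"
  shows "is_pol A F (card S) (t k S)"
  unfolding tfun_eq[abs_def]
  using is_pol_ldiv is_pol_spread[OF alg zero assms(2)] assms(1) is_pol_f by blast

lemma zero_absorbing_tfun:
  assumes pol: "is_pol A F m (rprod k)" and agrees: "rprod_agrees k"
    and S: "S \<subseteq> {0..<m}" "card S = Suc k"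
  shows "zero_absorbing A e (Suc k) (t k S)"
  unfolding zero_absorbing_def
proof (intro allI impI)
  fix ys assume len: "length ys = Suc k" and ys: "set ys \<subseteq> A" and "e \<in> set ys"
  let ?z = "spread m e S ys"
  have fin: "finite S" using finite_subset[OF S(1) finite_atLeastLessThan] .
  have z: "set ?z \<subseteq> A" using set_spread_subset[OF S(1) _ ys zero] len S(2) by simp
  have "restr S ?z = ys" using restr_spread[OF S(1)] len S(2) by simp
  then have "e \<in> set (restr S ?z)" using \<open>e \<in> set ys\<close> by simp
  then have "e \<in> (\<lambda>i. ?z ! i) ` S" by (simp only: set_restr[OF fin])
  then obtain i0 where i0: "i0 \<in> S" "?z ! i0 = e" by (metis imageE)
  define S' where "S' = {i \<in> S. ?z ! i \<noteq> e}"
  have "S' \<subseteq> S - {i0}" using i0 unfolding S'_def by auto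
  then have "card S' \<le> k" using i0 S(2) fin by (metis card_Diff_singleton card_mono diff_Suc_1 finite_Diff)
  moreover have S': "S' \<subseteq> {0..<m}" using S(1) unfolding S'_def by auto
  moreover have "sub0 m e S' ?z = ?z"
    by (rule nth_equalityI) (auto simp: nth_sub0 nth_spread S'_def)
  ultimately have "f ?z = rprod k ?z"
    using agrees z unfolding rprod_agrees_def by (metis length_spread)
  then show "t k S ys = e" using tfun_eq ldiv_self is_pol_closed[OF alg pol _ z] by simp
qed

lemma tfun_restr_sub0_other:
  assumes pol: "is_pol A F m (rprod k)" and agrees: "rprod_agrees k"
    and S: "S \<subseteq> {0..<m}" "card S \<le> Suc k" and S': "S' \<in> set (ordS k)" "S' \<noteq> S"
    and xs: "length xs = m" "set xs \<subseteq> A"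
  shows "t k S' (restr S' (sub0 m e S xs)) = e"
proof -
  have S'm: "S' \<subseteq> {0..<m}" and cS': "card S' = Suc k" using S' set_ordS by auto
  have "\<not> S' \<subseteq> S"
  proof
    assume "S' \<subseteq> S"
    then have "S' = S" using card_seteq[OF finite_subset[OF S(1) finite_atLeastLessThan]] S(2) cS' by simp
    with S'(2) show False ..
  qed
  then obtain i where i: "i \<in> S'" "i \<notin> S" by auto
  then have "sub0 m e S xs ! i = e" using S'm by (auto simp: nth_sub0)
  then have "e \<in> set (restr S' (sub0 m e S xs))"
    using i set_restr[OF finite_subset[OF S'm finite_atLeastLessThan]] by force
  moreover have "set (restr S' (sub0 m e S xs)) \<subseteq> A"
    using set_restr_subset[OF S'm _ set_sub0_subset[OF xs(2,1) zero]] by simp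
  ultimately show ?thesis
    using zero_absorbing_tfun[OF pol agrees S'm cS'] cS' unfolding zero_absorbing_def by simp
qed

lemma rr_Suc_sub0:
  assumes pol: "is_pol A F m (rprod k)" and agrees: "rprod_agrees k"
    and S: "S \<subseteq> {0..<m}" "card S \<le> Suc k" and xs: "length xs = m" "set xs \<subseteq> A"
  shows "r (Suc k) (sub0 m e S xs) = (if card S = Suc k then t k S (restr S (sub0 m e S xs)) else e)"
proof -
  let ?z = "sub0 m e S xs"
  have z: "set ?z \<subseteq> A" using set_sub0_subset[OF xs(2,1) zero] .
  have closed: "t k S' (restr S' ys) \<in> A" if "S' \<subseteq> {0..<m}" "length ys = m" "set ys \<subseteq> A" for S' ys
    using is_pol_closed[OF alg is_pol_tfun[OF pol that(1)] _ set_restr_subset[OF that]] by simp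
  have inner: "prodL mal e (map (\<lambda>S'. t k S' (restr S' ?z))
        (filter (\<lambda>S'. t k S' (restr S' b) = a) (ordS k)))
      = (if S \<in> set (ordS k) \<and> t k S (restr S b) = a then t k S (restr S ?z) else e)" for a
    using distinct_ordS set_ordS closed[OF _ _ z] tfun_restr_sub0_other[OF pol agrees S _ _ xs]
    by (subst prodL_map_single) auto
  show ?thesis
  proof (cases "card S = Suc k")
    case True
    then have S_in: "S \<in> set (ordS k)" using S set_ordS by auto
    have b: "t k S (restr S b) \<in> set as" using closed[OF S(1) length_b set_b] set_as by simp
    have "r (Suc k) ?z
        = prodL mal e (map (\<lambda>a. if t k S (restr S b) = a then t k S (restr S ?z) else e) as)"
      using S_in by (simp add: rr_Suc inner)
    also have "\<dots> = t k S (restr S ?z)"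
      using distinct_as closed[OF S(1) _ z] zero b by (subst prodL_map_single) auto
    finally show ?thesis using True by simp
  next
    case False
    then have "S \<notin> set (ordS k)" using set_ordS by auto
    then show ?thesis using False by (simp add: rr_Suc inner prodL_all_zero)
  qed
qed

lemma is_pol_rr_Suc:
  assumes "is_pol A F m (rprod k)"
  shows "is_pol A F m (r (Suc k))"
proof -
  have "is_pol A F m (\<lambda>xs. t k S (restr S xs))" if "S \<in> set (ordS k)" for S
    using is_pol_restr[OF alg _ is_pol_tfun[OF assms]] that set_ordS by auto
  then show ?thesis
    unfolding rr_Suc[abs_def] by (intro is_pol_prodL) simp
qed

lemma rprod_agrees_Suc:
  assumes pol: "is_pol A F m (rprod k)" and agrees: "rprod_agrees k"
  shows "rprod_agrees (Suc k)"
  unfolding rprod_agrees_def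
proof (intro allI impI)
  fix S xs assume S: "S \<subseteq> {0..<m}" "card S \<le> Suc k" and xs: "length xs = m" "set xs \<subseteq> A"
  let ?z = "sub0 m e S xs"
  have z: "length ?z = m" "set ?z \<subseteq> A" using set_sub0_subset[OF xs(2,1) zero] by simp_all
  have prod: "rprod k ?z \<in> A" using is_pol_closed[OF alg pol z] .
  show "f ?z = rprod (Suc k) ?z"
  proof (cases "card S = Suc k")
    case True
    have "spread m e S (restr S ?z) = ?z"
      using spread_restr[OF S(1), of e ?z] sub0_sub0[OF xs(1), of e S S] by simp
    then have "r (Suc k) ?z = ldiv A mal e (rprod k ?z) (f ?z)"
      using rr_Suc_sub0[OF pol agrees S xs] True tfun_eq by simp
    then show ?thesis
      using rprod_Suc lmul_ldiv[OF prod is_pol_closed[OF alg is_pol_f z]] by simp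
  next
    case False
    then have "f ?z = rprod k ?z" using agrees S xs unfolding rprod_agrees_def by simp
    moreover have "r (Suc k) ?z = e" using rr_Suc_sub0[OF pol agrees S xs] False by simp
    ultimately show ?thesis using rprod_Suc lmul_zero_right[OF prod] by simp
  qed
qed

lemma rprod_invariant: "is_pol A F m (rprod k) \<and> rprod_agrees k"
proof (induction k)
  case 0
  have "set (replicate m e) \<subseteq> A" using zero by (cases m) auto
  then have c: "f (replicate m e) \<in> A" using is_pol_closed[OF alg is_pol_f] by simp
  have rprod_0: "rprod 0 = (\<lambda>xs. f (replicate m e))"
    by (rule ext) (simp add: rprod_def rr_0 prodL_def lmul_zero_left c)
  have "rprod_agrees 0"
    unfolding rprod_agrees_def
  proof (intro allI impI)
    fix S xs assume S: "S \<subseteq> {0..<m}" "card S \<le> 0"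
    then have "S = {}" using finite_subset[OF S(1) finite_atLeastLessThan] by simp
    then show "f (sub0 m e S xs) = rprod 0 (sub0 m e S xs)" by (simp add: rprod_0 sub0_empty)
  qed
  then show ?case using is_pol_const[OF c] by (simp add: rprod_0)
next
  case (Suc k)
  then show ?case
    using is_pol_lmul[OF _ is_pol_rr_Suc] rprod_agrees_Suc unfolding rprod_Suc[abs_def] by blast
qed

lemmas is_pol_rprod = rprod_invariant[THEN conjunct1]
  and rprod_agrees_all = rprod_invariant[THEN conjunct2]

lemma is_pol_zero_absorbing_tt:
  assumes "S \<subseteq> {0..<m}"
  shows "is_pol A F (card S) (tt A mal e f m as b ordS S)
    \<and> zero_absorbing A e (card S) (tt A mal e f m as b ordS S)"
proof (cases "S = {}")
  case True
  then show ?thesis using is_pol_const[OF zero] by (simp add: tt_def zero_absorbing_def)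
next
  case False
  then obtain k where k: "card S = Suc k"
    using finite_subset[OF assms finite_atLeastLessThan] by (metis card_0_eq not0_implies_Suc)
  then show ?thesis
    using False is_pol_tfun[OF is_pol_rprod assms]
      zero_absorbing_tfun[OF is_pol_rprod rprod_agrees_all assms] by (simp add: tt_def)
qed

lemma f_sub0_eq_rprod:
  "S \<subseteq> {0..<m} \<Longrightarrow> length xs = m \<Longrightarrow> set xs \<subseteq> A \<Longrightarrow>
    f (sub0 m e S xs) = rprod (card S) (sub0 m e S xs)"
  using rprod_agrees_all[of "card S"] unfolding rprod_agrees_def by simp

lemma f_eq_rprod: "length xs = m \<Longrightarrow> set xs \<subseteq> A \<Longrightarrow> f xs = rprod m xs"
  using f_sub0_eq_rprod[of "{0..<m}" xs] sub0_full[of xs m e] by simp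

lemma rr_eq_zero:
  assumes trivial: "\<forall>k\<ge>n. \<forall>p. is_pol A F k p \<longrightarrow> zero_absorbing A e k p \<longrightarrow>
      (\<forall>xs. length xs = k \<longrightarrow> set xs \<subseteq> A \<longrightarrow> p xs = e)"
    and "0 < n" "n \<le> k" and xs: "length xs = m" "set xs \<subseteq> A"
  shows "r k xs = e"
proof -
  obtain j where j: "k = Suc j" using assms(2,3) by (metis gr0_implies_Suc less_le_trans)
  have "t j S (restr S xs) = e" if "S \<in> set (ordS j)" for S
  proof -
    have S: "S \<subseteq> {0..<m}" "card S = Suc j" using that set_ordS by auto
    have "is_pol A F k (t j S)" "zero_absorbing A e k (t j S)"
      using is_pol_tfun[OF is_pol_rprod S(1)] zero_absorbing_tfun[OF is_pol_rprod rprod_agrees_all S]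
        S(2) j by simp_all
    then show ?thesis
      using trivial \<open>n \<le> k\<close> S j set_restr_subset[OF S(1) xs] by simp
  qed
  then show ?thesis
    unfolding j rr_Suc by (intro prodL_all_zero) (auto intro!: prodL_all_zero)
qed

end

theorem mainTheorem1:
  fixes A :: "'a set" and F :: "(nat \<times> ('a list \<Rightarrow> 'a)) set"
    and mal :: "'a list \<Rightarrow> 'a" and e :: 'a and f :: "'a list \<Rightarrow> 'a" and m :: nat
    and as :: "'a list" and b :: "'a list" and ordS :: "nat \<Rightarrow> nat set list"
  assumes "algebra A F" and "finite A" and "nilpotent A F" and "malcev_term A F mal"
    and "e \<in> A" and "is_pol A F m f"
    and "distinct as" and "set as = A"
    and "length b = m" and "set b \<subseteq> A"
    and "\<forall>k. distinct (ordS k) \<and> set (ordS k) = {S. S \<subseteq> {0..<m} \<and> card S = Suc k}"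
  shows
    "(\<forall>S \<subseteq> {0..<m}. is_pol A F (card S) (tt A mal e f m as b ordS S)
                      \<and> zero_absorbing A e (card S) (tt A mal e f m as b ordS S))
   \<and> (\<forall>S \<subseteq> {0..<m}. \<forall>xs. length xs = m \<longrightarrow> set xs \<subseteq> A \<longrightarrow>
        f (sub0 m e S xs) =
          prodL mal e (map (\<lambda>i. rr A mal e f m as b ordS i (sub0 m e S xs)) [0..<Suc (card S)]))
   \<and> (\<forall>xs. length xs = m \<longrightarrow> set xs \<subseteq> A \<longrightarrow>
        f xs = prodL mal e (map (\<lambda>i. rr A mal e f m as b ordS i xs) [0..<Suc m]))
   \<and> (\<forall>n > 0. (\<forall>k \<ge> n. \<forall>p. is_pol A F k p \<longrightarrow> zero_absorbing A e k p \<longrightarrow>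
                   (\<forall>xs. length xs = k \<longrightarrow> set xs \<subseteq> A \<longrightarrow> p xs = e))
        \<longrightarrow> (\<forall>k. n \<le> k \<longrightarrow> k \<le> m \<longrightarrow>
               (\<forall>xs. length xs = m \<longrightarrow> set xs \<subseteq> A \<longrightarrow> rr A mal e f m as b ordS k xs = e)))"
proof -
  interpret polynomial_decomposition A F mal e f m as b ordS
    by unfold_locales (use assms in auto)
  show ?thesis
    using is_pol_zero_absorbing_tt f_sub0_eq_rprod f_eq_rprod rr_eq_zero
    unfolding rprod_def by (intro conjI allI impI) simp_all
qed

end
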